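(* Let $d=\mu_+-\mu_-$. For every $\epsilon\in[0,d/4]$ and every $K\in(1,\bar B_K(\epsilon)]$, where $$\bar B_K(\epsilon)=\min\left\{\exp\!\left(\frac{(d-2\epsilon)^2}{2}\right),\ \phi^{-1}\!\left(\frac{d}{\epsilon}-2\right)\right\}$$ (with $\phi^{-1}(+\infty):=+\infty$ when $\epsilon=0$), and $\phi^{-1}$ is the inverse of the bijection $\phi:[1,+\infty)\to[2,+\infty)$, $\phi(x)=x+1/x$, one has $$R^{\epsilon}_{\mathrm{bdy}}(\theta_{\mathrm f})\;\ge\;R^{\epsilon}_{\mathrm{bdy}}(\theta^* )\;\ge\;R^{\epsilon}_{\mathrm{bdy}}(\theta^{(\epsilon)}_{\mathrm r}).$$
   Context: Setting (one-dimensional Gaussian mixture). Fix real numbers $\mu_-<\mu_+$ and $K>1$, and let $d=\mu_+-\mu_-$. Let $(X,Y)$ be a random pair with $\Pr(Y=1)=\Pr(Y=-1)=\tfrac12$, $X\mid Y=-1\sim\mathcal N(\mu_-,1)$, and $X\mid Y=1\sim\mathcal N(\mu_+,K^2)$. For $\theta\in\mathbb R$, $f_\theta(x)=1$ if $x>\theta$ and $f_\theta(x)=-1$ otherwise. Class-conditional errors: $e_+(\theta)=\Pr(X\le\theta\mid Y=1)$, $e_-(\theta)=\Pr(X>\theta\mid Y=-1)$. Natural error: $R_{\mathrm{nat}}(\theta)=\tfrac12 e_+(\theta)+\tfrac12 e_-(\theta)$. For $\epsilon\ge0$, robust error: $R_{\mathrm{rob}}^{\epsilon}(\theta)=\tfrac12\Pr(X\le\theta+\epsilon\mid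 Y=1)+\tfrac12\Pr(X>\theta-\epsilon\mid Y=-1)$; boundary error: $R^{\epsilon}_{\mathrm{bdy}}(\theta)=\Pr(\exists\tau,\ |\tau|\le\epsilon,\ f_\theta(X+\tau)\ne f_\theta(X),\ f_\theta(X)=Y)=\tfrac12\Pr(\theta<X\le\theta+\epsilon\mid Y=1)+\tfrac12\Pr(\theta-\epsilon<X\le\theta\mid Y=-1)$. Optimal models: $\theta^*$ minimizes $R_{\mathrm{nat}}$ over $[\mu_-,\mu_+]$; $\theta_{\mathrm f}$ is the threshold in $[\mu_-,\mu_+]$ with $e_+(\theta_{\mathrm f})=e_-(\theta_{\mathrm f})$; $\theta^{(\epsilon)}_{\mathrm r}$ minimizes $R^{\epsilon}_{\mathrm{rob}}$ over $[\mu_-,\mu_+]$. *)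

theory Defs
  imports "HOL-Probability.Probability"
begin

definition gauss_prob :: "real \<Rightarrow> real \<Rightarrow> real set \<Rightarrow> real" where
  "gauss_prob mu sd A = measure (density lborel (normal_density mu sd)) A"

text \<open>Class-conditional errors: X | Y=1 ~ N(mu_p, K^2), X | Y=-1 ~ N(mu_m, 1).\<close>
definition e_plus :: "real \<Rightarrow> real \<Rightarrow> real \<Rightarrow> real" where
  "e_plus mu_p K \<theta> = gauss_prob mu_p K {..\<theta>}"

definition e_minus :: "real \<Rightarrow> real \<Rightarrow> real" where
  "e_minus mu_m \<theta> = gauss_prob mu_m 1 {\<theta><..}"

definition R_nat :: "real \<Rightarrow> real \<Rightarrow> real \<Rightarrow> real \<Rightarrow> real" where
  "R_nat mu_m mu_p K \<theta> = e_plus mu_p K \<theta> / 2 + e_minus mu_m \<theta> / 2"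

definition R_rob :: "real \<Rightarrow> real \<Rightarrow> real \<Rightarrow> real \<Rightarrow> real \<Rightarrow> real" where
  "R_rob mu_m mu_p K \<epsilon> \<theta> =
     gauss_prob mu_p K {..\<theta> + \<epsilon>} / 2 + gauss_prob mu_m 1 {\<theta> - \<epsilon><..} / 2"

definition R_bdy :: "real \<Rightarrow> real \<Rightarrow> real \<Rightarrow> real \<Rightarrow> real \<Rightarrow> real" where
  "R_bdy mu_m mu_p K \<epsilon> \<theta> =
     gauss_prob mu_p K {\<theta><..\<theta> + \<epsilon>} / 2 + gauss_prob mu_m 1 {\<theta> - \<epsilon><..\<theta>} / 2"

definition phi :: "real \<Rightarrow> real" where
  "phi x = x + 1 / x"

definition phi_inv :: "real \<Rightarrow> real" where
  "phi_inv y = (THE x. x \<ge> 1 \<and> phi x = y)"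

end

theory Submission
  imports Defs
begin

text \<open>
Since \<open>R_rob = R_nat + R_bdy\<close>, a minimiser of the robust error cannot have a larger boundary
error than a minimiser of the natural error; this is the second inequality.

For the first, the fair threshold is \<open>theta_fair = mu_m + d/(K + 1)\<close>, where the two standardised
distances to the means agree, and the first-order conditions put the natural minimiser \<open>theta*\<close>
to its right, at a point where the density \<open>f_plus\<close> of \<open>N(mu_p, K\<^sup>2)\<close> does not exceed
the density \<open>f_minus\<close> of \<open>N(mu_m, 1)\<close>. The derivative of \<open>R_bdy\<close> at \<open>theta\<close> is
\<open>((f_plus (theta + \<epsilon>) - f_minus (theta - \<epsilon>)) - (f_plus theta - f_minus theta)) / 2\<close>, and the gap
\<open>f_plus (theta + t) - f_minus (theta - t)\<close> decreases in \<open>t \<in> [0, \<epsilon>]\<close> as long as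
\<open>f_plus (theta + t) \<le> f_minus (theta - t)\<close>. The radius condition \<open>K \<le> phi_inv (d/\<epsilon> - 2)\<close>, i.e.
\<open>\<epsilon>(K + 1)\<^sup>2 \<le> d K\<close>, keeps this comparison valid along the whole shift for every
\<open>theta \<in> [theta_fair, theta*]\<close>, so \<open>R_bdy\<close> is non-increasing on that interval.
\<close>

lemma real_distribution_normal_density:
  assumes "0 < \<sigma>"
  shows "real_distribution (density lborel (normal_density \<mu> \<sigma>))"
  unfolding real_distribution_def real_distribution_axioms_def
  using assms by (simp add: prob_space_normal_density)

lemma gauss_prob_Ioc:
  assumes "a \<le> b" and "0 < \<sigma>"
  shows "gauss_prob \<mu> \<sigma> {a<..b} = gauss_prob \<mu> \<sigma> {..b} - gauss_prob \<mu> \<sigma> {..a}"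
proof -
  interpret prob_space "density lborel (normal_density \<mu> \<sigma>)"
    using prob_space_normal_density assms(2) by blast
  have split: "{..b} = {..a} \<union> {a<..b}"
    using assms(1) by auto
  have "prob {..b} = prob {..a} + prob {a<..b}"
    unfolding split by (rule finite_measure_Union) auto
  then show ?thesis
    unfolding gauss_prob_def by simp
qed

lemma gauss_prob_Ioi:
  assumes "0 < \<sigma>"
  shows "gauss_prob \<mu> \<sigma> {a<..} = 1 - gauss_prob \<mu> \<sigma> {..a}"
proof -
  interpret prob_space "density lborel (normal_density \<mu> \<sigma>)"
    using prob_space_normal_density assms by blast
  have compl: "{a<..} = space (density lborel (normal_density \<mu> \<sigma>)) - {..a}"
    by auto
  show ?thesis
    unfolding gauss_prob_def compl by (subst prob_compl) auto
qed

lemma gauss_prob_Ioc_eq_interval_integral: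
  assumes "a \<le> b" and "0 < \<sigma>"
  shows "gauss_prob \<mu> \<sigma> {a<..b} = (LBINT x=a..b. normal_density \<mu> \<sigma> x)"
proof -
  interpret prob_space "density lborel (normal_density \<mu> \<sigma>)"
    using prob_space_normal_density assms(2) by blast
  have "gauss_prob \<mu> \<sigma> {a<..b} = integral\<^sup>L lborel (\<lambda>x. normal_density \<mu> \<sigma> x *\<^sub>R indicator {a<..b} x)"
    unfolding gauss_prob_def using assms by (subst integral_density[symmetric]) auto
  also have "\<dots> = (LBINT x=a..b. normal_density \<mu> \<sigma> x)"
    using assms(1) by (simp add: interval_integral_Ioc set_lebesgue_integral_def mult.commute)
  finally show ?thesis .
qed

lemma gauss_cdf_eq_interval_integral:
  assumes "0 < \<sigma>"
  shows "gauss_prob \<mu> \<sigma> {..u} = gauss_prob \<mu> \<sigma> {..c} + (LBINT x=c..u. normal_density \<mu> \<sigma> x)"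
proof (cases "c \<le> u")
  case True
  then show ?thesis
    using gauss_prob_Ioc_eq_interval_integral[OF True assms, of \<mu>] gauss_prob_Ioc[OF True assms, of \<mu>]
    by linarith
next
  case False
  then have "u \<le> c"
    by simp
  then show ?thesis
    using gauss_prob_Ioc_eq_interval_integral[OF \<open>u \<le> c\<close> assms, of \<mu>] gauss_prob_Ioc[OF \<open>u \<le> c\<close> assms, of \<mu>]
      interval_integral_endpoints_reverse[of c u "normal_density \<mu> \<sigma>"] by simp
qed

lemma gauss_cdf_has_real_derivative:
  assumes "0 < \<sigma>"
  shows "((\<lambda>x. gauss_prob \<mu> \<sigma> {..x}) has_real_derivative normal_density \<mu> \<sigma> x) (at x)"
proof -
  have "continuous_on {x - 1..x + 1} (normal_density \<mu> \<sigma>)"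
    unfolding normal_density_def by (intro continuous_intros) (use assms in auto)
  then have "((\<lambda>u. LBINT y=x-1..u. normal_density \<mu> \<sigma> y) has_real_derivative normal_density \<mu> \<sigma> x)
      (at x within {x-1..x+1})"
    by (subst has_real_derivative_iff_has_vector_derivative, intro interval_integral_FTC2) auto
  then have "((\<lambda>u. LBINT y=x-1..u. normal_density \<mu> \<sigma> y) has_real_derivative normal_density \<mu> \<sigma> x) (at x)"
    by (simp add: at_within_Icc_at)
  then have "((\<lambda>u. gauss_prob \<mu> \<sigma> {..x-1} + (LBINT y=x-1..u. normal_density \<mu> \<sigma> y))
      has_real_derivative 0 + normal_density \<mu> \<sigma> x) (at x)"
    by (rule DERIV_add[OF DERIV_const])
  moreover have "(\<lambda>u. gauss_prob \<mu> \<sigma> {..x-1} + (LBINT y=x-1..u. normal_density \<mu> \<sigma> y))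
      = (\<lambda>u. gauss_prob \<mu> \<sigma> {..u})"
    by (intro ext) (rule gauss_cdf_eq_interval_integral[OF assms, symmetric])
  ultimately show ?thesis
    by simp
qed

lemma gauss_cdf_strict_mono:
  assumes "0 < \<sigma>"
  shows "strict_mono (\<lambda>x. gauss_prob \<mu> \<sigma> {..x})"
proof (rule strict_monoI)
  fix a b :: real
  assume "a < b"
  then show "gauss_prob \<mu> \<sigma> {..a} < gauss_prob \<mu> \<sigma> {..b}"
  proof (rule DERIV_pos_imp_increasing)
    fix x
    show "\<exists>y. ((\<lambda>x. gauss_prob \<mu> \<sigma> {..x}) has_real_derivative y) (at x) \<and> 0 < y"
      using gauss_cdf_has_real_derivative[OF assms] normal_density_pos[OF assms] by blast
  qed
qed

lemma gauss_cdf_limits: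
  assumes "0 < \<sigma>"
  shows "((\<lambda>x. gauss_prob \<mu> \<sigma> {..x}) \<longlongrightarrow> 0) at_bot"
    and "((\<lambda>x. gauss_prob \<mu> \<sigma> {..x}) \<longlongrightarrow> 1) at_top"
proof -
  interpret real_distribution "density lborel (normal_density \<mu> \<sigma>)"
    using real_distribution_normal_density[OF assms] .
  show "((\<lambda>x. gauss_prob \<mu> \<sigma> {..x}) \<longlongrightarrow> 0) at_bot"
    using cdf_lim_at_bot unfolding cdf_def gauss_prob_def .
  show "((\<lambda>x. gauss_prob \<mu> \<sigma> {..x}) \<longlongrightarrow> 1) at_top"
    using cdf_lim_at_top_prob unfolding cdf_def gauss_prob_def .
qed

lemma normal_density_has_real_derivative:
  assumes "0 < \<sigma>"
  shows "(normal_density \<mu> \<sigma> has_real_derivative - (x - \<mu>) / \<sigma>\<^sup>2 * normal_density \<mu> \<sigma> x) (at x)"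
proof -
  have "((\<lambda>x. - (x - \<mu>)\<^sup>2 / (2 * \<sigma>\<^sup>2)) has_real_derivative - (x - \<mu>) / \<sigma>\<^sup>2) (at x)"
    using assms by (auto intro!: derivative_eq_intros simp: power2_eq_square field_simps)
  from DERIV_cmult[OF DERIV_chain2[OF DERIV_exp this], of "1 / sqrt (2 * pi * \<sigma>\<^sup>2)"]
  show ?thesis
    unfolding normal_density_def by (simp add: mult_ac)
qed

lemma normal_density_affine_std:
  assumes "0 < \<sigma>"
  shows "\<sigma> * normal_density \<mu> \<sigma> (\<mu> + \<sigma> * z) = std_normal_density z"
  using assms by (simp add: normal_density_def real_sqrt_mult power_mult_distrib)

lemma gauss_cdf_reflect:
  assumes "0 < \<sigma>" and "0 < \<tau>"
  shows "gauss_prob \<mu> \<sigma> {..\<mu> - \<sigma> * z} + gauss_prob \<nu> \<tau> {..\<nu> + \<tau> * z} = 1"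
proof -
  define w where "w z = gauss_prob \<mu> \<sigma> {..\<mu> - \<sigma> * z} + gauss_prob \<nu> \<tau> {..\<nu> + \<tau> * z}" for z
  have "(w has_real_derivative 0) (at z)" for z
  proof -
    have "std_normal_density (- z) = std_normal_density z"
      by (simp add: std_normal_density_def)
    then have "\<sigma> * normal_density \<mu> \<sigma> (\<mu> - \<sigma> * z) = \<tau> * normal_density \<nu> \<tau> (\<nu> + \<tau> * z)"
      using normal_density_affine_std[OF assms(1), of \<mu> "- z"] normal_density_affine_std[OF assms(2), of \<nu> z]
      by simp
    moreover have "(w has_real_derivative
        normal_density \<mu> \<sigma> (\<mu> - \<sigma> * z) * (- \<sigma>) + normal_density \<nu> \<tau> (\<nu> + \<tau> * z) * \<tau>) (at z)"
      unfolding w_def using assms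
      by (intro DERIV_add DERIV_chain2[OF gauss_cdf_has_real_derivative]) (auto intro!: derivative_eq_intros)
    ultimately show ?thesis
      by (simp add: mult.commute)
  qed
  then have w_const: "w z = w 0" for z
    using DERIV_isconst_all by blast
  have "filterlim (\<lambda>z. - \<mu> + \<sigma> * z) at_top at_top"
    by (intro filterlim_tendsto_add_at_top[OF tendsto_const]
        filterlim_tendsto_pos_mult_at_top[OF tendsto_const assms(1) filterlim_ident])
  then have "filterlim (\<lambda>z. \<mu> - \<sigma> * z) at_bot at_top"
    by (simp add: filterlim_uminus_at_bot)
  then have "((\<lambda>z. gauss_prob \<mu> \<sigma> {..\<mu> - \<sigma> * z}) \<longlongrightarrow> 0) at_top"
    by (rule filterlim_compose[OF gauss_cdf_limits(1)[OF assms(1)]])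
  moreover have "filterlim (\<lambda>z. \<nu> + \<tau> * z) at_top at_top"
    by (intro filterlim_tendsto_add_at_top[OF tendsto_const]
        filterlim_tendsto_pos_mult_at_top[OF tendsto_const assms(2) filterlim_ident])
  then have "((\<lambda>z. gauss_prob \<nu> \<tau> {..\<nu> + \<tau> * z}) \<longlongrightarrow> 1) at_top"
    by (rule filterlim_compose[OF gauss_cdf_limits(2)[OF assms(2)]])
  ultimately have "(w \<longlongrightarrow> 0 + 1) at_top"
    unfolding w_def by (rule tendsto_add)
  then have "(w \<longlongrightarrow> 1) at_top"
    by simp
  then have "((\<lambda>_::real. w 0) \<longlongrightarrow> 1) at_top"
    by (rule Lim_transform_eventually) (auto intro: always_eventually w_const)
  then have "w z = 1"
    using w_const[of z] by (simp add: tendsto_const_iff)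
  then show ?thesis
    unfolding w_def .
qed

lemma min_on_Icc_deriv_nonneg:
  fixes f :: "real \<Rightarrow> real"
  assumes "(f has_real_derivative D) (at x)" and "x < b" and "\<forall>y\<in>{x..b}. f x \<le> f y"
  shows "0 \<le> D"
proof (rule ccontr)
  assume "\<not> 0 \<le> D"
  then have "D < 0"
    by simp
  then obtain \<delta> where "0 < \<delta>" and \<delta>: "\<forall>h>0. h < \<delta> \<longrightarrow> f (x + h) < f x"
    using DERIV_neg_dec_right[OF assms(1)] by blast
  define h where "h = min (\<delta> / 2) (b - x)"
  have "0 < h" and "h < \<delta>" and "x + h \<in> {x..b}"
    using \<open>0 < \<delta>\<close> assms(2) unfolding h_def by auto
  then have "f (x + h) < f x" and "f x \<le> f (x + h)"
    using \<delta> assms(3) by simp_all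
  then show False
    by simp
qed

lemma min_on_Icc_deriv_nonpos:
  fixes f :: "real \<Rightarrow> real"
  assumes "(f has_real_derivative D) (at x)" and "a < x" and "\<forall>y\<in>{a..x}. f x \<le> f y"
  shows "D \<le> 0"
proof (rule ccontr)
  assume "\<not> D \<le> 0"
  then have "0 < D"
    by simp
  then obtain \<delta> where "0 < \<delta>" and \<delta>: "\<forall>h>0. h < \<delta> \<longrightarrow> f (x - h) < f x"
    using DERIV_pos_inc_left[OF assms(1)] by blast
  define h where "h = min (\<delta> / 2) (x - a)"
  have "0 < h" and "h < \<delta>" and "x - h \<in> {a..x}"
    using \<open>0 < \<delta>\<close> assms(2) unfolding h_def by auto
  then have "f (x - h) < f x" and "f x \<le> f (x - h)"
    using \<delta> assms(3) by simp_all
  then show False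
    by simp
qed

lemma phi_strict_mono_on: "strict_mono_on {1..} phi"
proof (rule strict_mono_onI)
  fix a b :: real
  assume "a \<in> {1..}" "b \<in> {1..}" "a < b"
  then have "1 < a * b"
    using mult_le_less_imp_less[of 1 a 1 b] by auto
  then have "0 < (b - a) * (1 - 1 / (a * b))"
    using \<open>a < b\<close> by simp
  also have "(b - a) * (1 - 1 / (a * b)) = phi b - phi a"
    using \<open>a \<in> {1..}\<close> \<open>a < b\<close> unfolding phi_def by (simp add: field_simps)
  finally show "phi a < phi b"
    by simp
qed

lemma phi_phi_inv:
  assumes "2 \<le> y"
  shows "1 \<le> phi_inv y" and "phi (phi_inv y) = y"
proof -
  \<comment> \<open>the larger root of \<open>x\<^sup>2 - y x + 1 = 0\<close>\<close>
  define x where "x = (y + sqrt (y\<^sup>2 - 4)) / 2"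
  have sq: "sqrt (y\<^sup>2 - 4) ^ 2 = y\<^sup>2 - 4"
    using assms mult_mono[of 2 y 2 y] by (intro real_sqrt_pow2) (simp add: power2_eq_square)
  have "0 \<le> sqrt (y\<^sup>2 - 4)"
    using assms mult_mono[of 2 y 2 y] by (simp add: power2_eq_square)
  then have "2 \<le> y + sqrt (y\<^sup>2 - 4)"
    using assms by linarith
  then have "1 \<le> x"
    unfolding x_def by simp
  moreover have "phi x = y"
  proof -
    have "x * x + 1 = y * x"
      unfolding x_def using sq by (simp add: field_simps power2_eq_square)
    then show ?thesis
      using \<open>1 \<le> x\<close> unfolding phi_def by (simp add: field_simps)
  qed
  moreover have "z = x" if "1 \<le> z" and "phi z = y" for z
    using inj_onD[OF strict_mono_on_imp_inj_on[OF phi_strict_mono_on], of z x] that \<open>1 \<le> x\<close> \<open>phi x = y\<close>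
    by simp
  ultimately have "phi_inv y = x"
    unfolding phi_inv_def by (intro the_equality) blast+
  then show "1 \<le> phi_inv y" and "phi (phi_inv y) = y"
    using \<open>1 \<le> x\<close> \<open>phi x = y\<close> by simp_all
qed

lemma phi_inv_radius_bound:
  fixes \<epsilon> d K :: real
  assumes "0 < \<epsilon>" and "4 * \<epsilon> \<le> d" and "1 \<le> K" and "K \<le> phi_inv (d / \<epsilon> - 2)"
  shows "\<epsilon> * (K + 1)\<^sup>2 \<le> d * K"
proof -
  have "2 \<le> d / \<epsilon> - 2"
    using assms(1,2) by (simp add: field_simps)
  then have "phi K \<le> phi (phi_inv (d / \<epsilon> - 2))"
    using phi_phi_inv(1) assms(3,4) by (intro strict_mono_on_leD[OF phi_strict_mono_on]) auto
  also have "\<dots> = d / \<epsilon> - 2"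
    using phi_phi_inv(2) \<open>2 \<le> d / \<epsilon> - 2\<close> .
  finally have "K + 1 / K \<le> d / \<epsilon> - 2"
    unfolding phi_def .
  then have "\<epsilon> * K * (K + 1 / K) \<le> \<epsilon> * K * (d / \<epsilon> - 2)"
    using assms(1,3) by (intro mult_left_mono) auto
  moreover have "\<epsilon> * K * (K + 1 / K) = \<epsilon> * K\<^sup>2 + \<epsilon>" and "\<epsilon> * K * (d / \<epsilon> - 2) = d * K - 2 * \<epsilon> * K"
    using assms(1,3) by (simp_all add: field_simps power2_eq_square)
  moreover have "\<epsilon> * (K + 1)\<^sup>2 = \<epsilon> * K\<^sup>2 + 2 * \<epsilon> * K + \<epsilon>"
    by (simp add: power2_eq_square algebra_simps)
  ultimately show ?thesis
    by linarith
qed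

locale gaussian_mixture =
  fixes mu_m mu_p K :: real
  assumes means_less: "mu_m < mu_p" and K_gt_1: "1 < K"
begin

abbreviation F_plus :: "real \<Rightarrow> real" where "F_plus x \<equiv> gauss_prob mu_p K {..x}"
abbreviation F_minus :: "real \<Rightarrow> real" where "F_minus x \<equiv> gauss_prob mu_m 1 {..x}"
abbreviation f_plus :: "real \<Rightarrow> real" where "f_plus \<equiv> normal_density mu_p K"
abbreviation f_minus :: "real \<Rightarrow> real" where "f_minus \<equiv> normal_density mu_m 1"

lemma K_pos: "0 < K"
  using K_gt_1 by simp

lemma R_nat_eq: "R_nat mu_m mu_p K \<theta> = F_plus \<theta> / 2 + (1 - F_minus \<theta>) / 2"
  by (simp add: R_nat_def e_plus_def e_minus_def gauss_prob_Ioi)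

lemma R_bdy_eq:
  assumes "0 \<le> \<epsilon>"
  shows "R_bdy mu_m mu_p K \<epsilon> \<theta> = (F_plus (\<theta> + \<epsilon>) - F_plus \<theta>) / 2 + (F_minus \<theta> - F_minus (\<theta> - \<epsilon>)) / 2"
  using assms K_pos by (simp add: R_bdy_def gauss_prob_Ioc)

lemma R_rob_eq:
  assumes "0 \<le> \<epsilon>"
  shows "R_rob mu_m mu_p K \<epsilon> \<theta> = R_nat mu_m mu_p K \<theta> + R_bdy mu_m mu_p K \<epsilon> \<theta>"
  using assms by (simp add: R_rob_def R_nat_eq R_bdy_eq gauss_prob_Ioi field_simps)

lemma R_nat_has_real_derivative:
  "(R_nat mu_m mu_p K has_real_derivative (f_plus \<theta> - f_minus \<theta>) / 2) (at \<theta>)"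
proof -
  have "((\<lambda>\<theta>. F_plus \<theta> / 2 + (1 - F_minus \<theta>) / 2) has_real_derivative f_plus \<theta> / 2 + (0 - f_minus \<theta>) / 2) (at \<theta>)"
    by (intro DERIV_add DERIV_cdivide DERIV_diff DERIV_const gauss_cdf_has_real_derivative K_pos zero_less_one)
  then show ?thesis
    unfolding R_nat_eq[abs_def] by (simp add: diff_divide_distrib)
qed

lemma R_bdy_has_real_derivative:
  assumes "0 \<le> \<epsilon>"
  shows "(R_bdy mu_m mu_p K \<epsilon> has_real_derivative
      (f_plus (\<theta> + \<epsilon>) - f_plus \<theta>) / 2 + (f_minus \<theta> - f_minus (\<theta> - \<epsilon>)) / 2) (at \<theta>)"
proof -
  have plus: "((\<lambda>\<theta>. F_plus (\<theta> + \<epsilon>)) has_real_derivative f_plus (\<theta> + \<epsilon>)) (at \<theta>)"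
    using DERIV_chain2[OF gauss_cdf_has_real_derivative[OF K_pos] DERIV_add[OF DERIV_ident DERIV_const]]
    by simp
  have minus: "((\<lambda>\<theta>. F_minus (\<theta> - \<epsilon>)) has_real_derivative f_minus (\<theta> - \<epsilon>)) (at \<theta>)"
    using DERIV_chain2[OF gauss_cdf_has_real_derivative[OF zero_less_one] DERIV_diff[OF DERIV_ident DERIV_const]]
    by simp
  show ?thesis
    unfolding R_bdy_eq[OF assms, abs_def]
    by (intro DERIV_add DERIV_cdivide DERIV_diff plus minus gauss_cdf_has_real_derivative K_pos zero_less_one)
qed

definition theta_fair :: real where
  "theta_fair = mu_m + (mu_p - mu_m) / (K + 1)"

lemma theta_fair_bounds: "mu_m < theta_fair" "theta_fair < mu_p"
  using means_less K_gt_1 unfolding theta_fair_def by (simp_all add: field_simps)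

lemma fair_threshold_unique:
  assumes "e_plus mu_p K \<theta> = e_minus mu_m \<theta>"
  shows "\<theta> = theta_fair"
proof -
  have "F_plus \<theta> + F_minus \<theta> = 1"
    using assms by (simp add: e_plus_def e_minus_def gauss_prob_Ioi)
  moreover have "F_plus theta_fair + F_minus theta_fair = 1"
  proof -
    define z where "z = (mu_p - mu_m) / (K + 1)"
    have "mu_p - K * z = theta_fair" and "mu_m + 1 * z = theta_fair"
      unfolding z_def theta_fair_def using K_pos by (simp_all add: field_simps)
    then show ?thesis
      using gauss_cdf_reflect[OF K_pos zero_less_one, where \<mu> = mu_p and \<nu> = mu_m and z = z] by simp
  qed
  moreover have "strict_mono (\<lambda>x. F_plus x + F_minus x)"
  proof (rule strict_monoI)
    fix a b :: real
    assume "a < b"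
    then show "F_plus a + F_minus a < F_plus b + F_minus b"
      using strict_monoD[OF gauss_cdf_strict_mono[OF K_pos]] strict_monoD[OF gauss_cdf_strict_mono[OF zero_less_one]]
      by (intro add_strict_mono) auto
  qed
  ultimately show ?thesis
    using strict_mono_eq[of "\<lambda>x. F_plus x + F_minus x" \<theta> theta_fair] by simp
qed

text \<open>\<open>f_plus x / f_minus y = exp (log_ratio x y) / K\<close>\<close>
definition log_ratio :: "real \<Rightarrow> real \<Rightarrow> real" where
  "log_ratio x y = (y - mu_m)\<^sup>2 / 2 - (x - mu_p)\<^sup>2 / (2 * K\<^sup>2)"

lemma f_plus_eq: "f_plus x = exp (log_ratio x y - ln K) * f_minus y"
proof -
  define A B where "A = (x - mu_p)\<^sup>2 / (2 * K\<^sup>2)" and "B = (y - mu_m)\<^sup>2 / 2"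
  have "exp (log_ratio x y - ln K) = exp B / exp A / K"
    unfolding log_ratio_def A_def B_def using K_pos by (simp add: exp_diff)
  moreover have "f_plus x = 1 / (K * sqrt (2 * pi) * exp A)" and "f_minus y = 1 / (sqrt (2 * pi) * exp B)"
    unfolding normal_density_def A_def B_def using K_pos
    by (simp_all add: real_sqrt_mult exp_minus field_simps)
  ultimately show ?thesis
    by simp
qed

lemma f_plus_le_f_minus_iff: "f_plus x \<le> f_minus y \<longleftrightarrow> log_ratio x y \<le> ln K"
  by (subst f_plus_eq[of x y]) (simp add: normal_density_pos mult_le_cancel_right1)

lemma f_plus_less_f_minus_iff: "f_plus x < f_minus y \<longleftrightarrow> log_ratio x y < ln K"
  by (subst f_plus_eq[of x y]) (simp add: normal_density_pos mult_less_cancel_right1)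

lemma log_ratio_diag_mono:
  assumes "mu_m \<le> a" and "a \<le> b" and "b \<le> mu_p"
  shows "log_ratio a a \<le> log_ratio b b"
proof -
  have "2 * K\<^sup>2 * (log_ratio b b - log_ratio a a) = (b - a) * (K\<^sup>2 * (a + b - 2 * mu_m) + (2 * mu_p - a - b))"
    using K_pos by (simp add: log_ratio_def power2_eq_square field_simps)
  also have "\<dots> \<ge> 0"
    using assms by (intro mult_nonneg_nonneg add_nonneg_nonneg) auto
  finally show ?thesis
    using K_pos by (simp add: zero_le_mult_iff)
qed

lemma log_ratio_theta_fair: "log_ratio theta_fair theta_fair = 0"
proof -
  have "(theta_fair - mu_p)\<^sup>2 = K\<^sup>2 * (theta_fair - mu_m)\<^sup>2"
    unfolding theta_fair_def using K_pos by (simp add: field_simps power2_eq_square)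
  then show ?thesis
    unfolding log_ratio_def using K_pos by simp
qed

lemma log_ratio_mu_m: "log_ratio mu_m mu_m < 0"
proof -
  have "0 < (mu_m - mu_p)\<^sup>2 / (2 * K\<^sup>2)"
    using means_less K_pos by (intro divide_pos_pos) auto
  then show ?thesis
    unfolding log_ratio_def by simp
qed

lemma R_nat_minimizer_ge_theta_fair:
  assumes "\<theta> \<in> {mu_m..mu_p}" and "\<forall>\<theta>'\<in>{mu_m..mu_p}. R_nat mu_m mu_p K \<theta> \<le> R_nat mu_m mu_p K \<theta>'"
  shows "theta_fair \<le> \<theta>"
proof (rule ccontr)
  assume "\<not> theta_fair \<le> \<theta>"
  then have "f_minus \<theta> \<le> f_plus \<theta>"
    using min_on_Icc_deriv_nonneg[OF R_nat_has_real_derivative, of \<theta> mu_p] assms theta_fair_bounds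
    by auto
  moreover have "log_ratio \<theta> \<theta> < ln K"
    using log_ratio_diag_mono[of \<theta> theta_fair] log_ratio_theta_fair assms(1) theta_fair_bounds
      \<open>\<not> theta_fair \<le> \<theta>\<close> ln_gt_zero[OF K_gt_1] by auto
  then have "f_plus \<theta> < f_minus \<theta>"
    by (simp add: f_plus_less_f_minus_iff)
  ultimately show False
    by simp
qed

lemma R_nat_minimizer_log_ratio_le:
  assumes "\<theta> \<in> {mu_m..mu_p}" and "\<forall>\<theta>'\<in>{mu_m..mu_p}. R_nat mu_m mu_p K \<theta> \<le> R_nat mu_m mu_p K \<theta>'"
  shows "log_ratio \<theta> \<theta> \<le> ln K"
proof (cases "\<theta> = mu_m")
  case True
  then show ?thesis
    using log_ratio_mu_m ln_gt_zero[OF K_gt_1] by simp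
next
  case False
  then have "f_plus \<theta> \<le> f_minus \<theta>"
    using min_on_Icc_deriv_nonpos[OF R_nat_has_real_derivative, of mu_m \<theta>] assms by auto
  then show ?thesis
    by (simp add: f_plus_le_f_minus_iff)
qed

lemma shift_bounds:
  assumes "theta_fair \<le> \<theta>" and "0 \<le> t" and "t * (K + 1)\<^sup>2 \<le> (mu_p - mu_m) * K"
  shows "t < \<theta> - mu_m"
    and "(K\<^sup>2 - 1) * t \<le> (K\<^sup>2 + 1) * (\<theta> - mu_m) - (mu_p - mu_m)"
proof -
  define x d where "x = \<theta> - mu_m" and "d = mu_p - mu_m"
  have x: "d \<le> (K + 1) * x"
    using assms(1) K_pos unfolding theta_fair_def x_def d_def by (simp add: field_simps)
  have "d * K < d * (K + 1)"
    using means_less unfolding d_def by simp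
  then have "t * (K + 1) * (K + 1) < d * (K + 1)"
    using assms(3) unfolding d_def by (simp add: power2_eq_square mult.assoc)
  then have "t * (K + 1) < d"
    using K_pos by simp
  then have "(K + 1) * t < (K + 1) * x"
    using x by (simp add: mult.commute)
  then show "t < \<theta> - mu_m"
    using K_pos unfolding x_def by simp
  have "(K + 1) * ((K\<^sup>2 - 1) * t) = (K - 1) * (t * (K + 1)\<^sup>2)"
    by (simp add: power2_eq_square algebra_simps)
  also have "\<dots> \<le> (K - 1) * (d * K)"
    using assms(3) K_gt_1 unfolding d_def by (intro mult_left_mono) auto
  also have "\<dots> = (K\<^sup>2 + 1) * d - (K + 1) * d"
    by (simp add: power2_eq_square algebra_simps)
  also have "\<dots> \<le> (K\<^sup>2 + 1) * ((K + 1) * x) - (K + 1) * d"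
    using mult_left_mono[OF x, of "K\<^sup>2 + 1"] by simp
  also have "\<dots> = (K + 1) * ((K\<^sup>2 + 1) * x - d)"
    by (simp add: algebra_simps)
  finally show "(K\<^sup>2 - 1) * t \<le> (K\<^sup>2 + 1) * (\<theta> - mu_m) - (mu_p - mu_m)"
    using K_pos unfolding x_def d_def by simp
qed

lemma log_ratio_shift_le:
  assumes "0 \<le> t" and "(K\<^sup>2 - 1) * t \<le> (K\<^sup>2 + 1) * (\<theta> - mu_m) - (mu_p - mu_m)"
  shows "log_ratio (\<theta> + t) (\<theta> - t) \<le> log_ratio \<theta> \<theta>"
proof -
  have "0 \<le> (K\<^sup>2 - 1) * t"
    using assms(1) K_gt_1 by (simp add: one_le_power)
  then have "0 \<le> t * (2 * ((K\<^sup>2 + 1) * (\<theta> - mu_m) - (mu_p - mu_m)) - (K\<^sup>2 - 1) * t)"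
    using assms by (intro mult_nonneg_nonneg) auto
  also have "\<dots> = 2 * K\<^sup>2 * (log_ratio \<theta> \<theta> - log_ratio (\<theta> + t) (\<theta> - t))"
    using K_pos by (simp add: log_ratio_def power2_eq_square field_simps)
  finally show ?thesis
    using K_pos by (simp add: zero_le_mult_iff)
qed

lemma density_gap_deriv_nonpos:
  assumes "theta_fair \<le> \<theta>" and "0 \<le> t" and "t * (K + 1)\<^sup>2 \<le> (mu_p - mu_m) * K"
    and "log_ratio \<theta> \<theta> \<le> ln K"
  shows "(mu_p - (\<theta> + t)) / K\<^sup>2 * f_plus (\<theta> + t) \<le> (\<theta> - t - mu_m) * f_minus (\<theta> - t)"
proof (cases "mu_p \<le> \<theta> + t")
  case True
  then have "(mu_p - (\<theta> + t)) / K\<^sup>2 * f_plus (\<theta> + t) \<le> 0"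
    using K_pos by (intro mult_nonpos_nonneg divide_nonpos_pos) auto
  also have "0 \<le> (\<theta> - t - mu_m) * f_minus (\<theta> - t)"
    using shift_bounds(1)[OF assms(1-3)] by simp
  finally show ?thesis .
next
  case False
  note shift = shift_bounds[OF assms(1-3)]
  have "mu_p - (\<theta> + t) \<le> (\<theta> - t - mu_m) * K\<^sup>2"
    using shift(2) by (simp add: algebra_simps)
  then have "(mu_p - (\<theta> + t)) / K\<^sup>2 \<le> \<theta> - t - mu_m"
    using K_pos by (simp add: divide_le_eq)
  moreover have "f_plus (\<theta> + t) \<le> f_minus (\<theta> - t)"
    using log_ratio_shift_le[OF assms(2) shift(2)] assms(4) by (simp add: f_plus_le_f_minus_iff)
  ultimately show ?thesis
    using False shift(1) by (intro mult_mono) auto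
qed

lemma density_gap_shift_le:
  assumes "theta_fair \<le> \<theta>" and "0 \<le> \<epsilon>" and "\<epsilon> * (K + 1)\<^sup>2 \<le> (mu_p - mu_m) * K"
    and "log_ratio \<theta> \<theta> \<le> ln K"
  shows "f_plus (\<theta> + \<epsilon>) - f_minus (\<theta> - \<epsilon>) \<le> f_plus \<theta> - f_minus \<theta>"
proof -
  have "f_plus (\<theta> + \<epsilon>) - f_minus (\<theta> - \<epsilon>) \<le> f_plus (\<theta> + 0) - f_minus (\<theta> - 0)"
  proof (rule DERIV_nonpos_imp_nonincreasing[OF assms(2)])
    fix t assume t: "0 \<le> t" "t \<le> \<epsilon>"
    have "t * (K + 1)\<^sup>2 \<le> \<epsilon> * (K + 1)\<^sup>2"
      using t(2) by (intro mult_right_mono) auto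
    then have "(mu_p - (\<theta> + t)) / K\<^sup>2 * f_plus (\<theta> + t) \<le> (\<theta> - t - mu_m) * f_minus (\<theta> - t)"
      using density_gap_deriv_nonpos assms(1,3,4) t(1) by force
    moreover have "((\<lambda>t. f_plus (\<theta> + t) - f_minus (\<theta> - t)) has_real_derivative
        (mu_p - (\<theta> + t)) / K\<^sup>2 * f_plus (\<theta> + t) - (\<theta> - t - mu_m) * f_minus (\<theta> - t)) (at t)"
    proof -
      have "((\<lambda>t. f_plus (\<theta> + t) - f_minus (\<theta> - t)) has_real_derivative
          - (\<theta> + t - mu_p) / K\<^sup>2 * f_plus (\<theta> + t) * 1 - - (\<theta> - t - mu_m) / 1\<^sup>2 * f_minus (\<theta> - t) * - 1) (at t)"
        by (intro DERIV_diff DERIV_chain2[OF normal_density_has_real_derivative] K_pos zero_less_one)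
          (auto intro!: derivative_eq_intros)
      then show ?thesis
        by (rule DERIV_cong) (use K_pos in \<open>simp add: field_simps\<close>)
    qed
    ultimately show "\<exists>y. ((\<lambda>t. f_plus (\<theta> + t) - f_minus (\<theta> - t)) has_real_derivative y) (at t) \<and> y \<le> 0"
      by force
  qed
  then show ?thesis
    by simp
qed

lemma R_bdy_nat_minimizer_le_theta_fair:
  assumes "0 \<le> \<epsilon>" and "\<epsilon> * (K + 1)\<^sup>2 \<le> (mu_p - mu_m) * K" and "\<theta> \<in> {mu_m..mu_p}"
    and "\<forall>\<theta>'\<in>{mu_m..mu_p}. R_nat mu_m mu_p K \<theta> \<le> R_nat mu_m mu_p K \<theta>'"
  shows "R_bdy mu_m mu_p K \<epsilon> \<theta> \<le> R_bdy mu_m mu_p K \<epsilon> theta_fair"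
proof (rule DERIV_nonpos_imp_nonincreasing[OF R_nat_minimizer_ge_theta_fair[OF assms(3,4)]])
  fix s assume s: "theta_fair \<le> s" "s \<le> \<theta>"
  have "log_ratio s s \<le> ln K"
    using log_ratio_diag_mono[of s \<theta>] R_nat_minimizer_log_ratio_le[OF assms(3,4)] s assms(3)
      theta_fair_bounds by auto
  then have "f_plus (s + \<epsilon>) - f_minus (s - \<epsilon>) \<le> f_plus s - f_minus s"
    using density_gap_shift_le s(1) assms(1,2) by blast
  then have "(f_plus (s + \<epsilon>) - f_plus s) / 2 + (f_minus s - f_minus (s - \<epsilon>)) / 2 \<le> 0"
    by (simp add: field_simps)
  then show "\<exists>y. (R_bdy mu_m mu_p K \<epsilon> has_real_derivative y) (at s) \<and> y \<le> 0"
    using R_bdy_has_real_derivative[OF assms(1)] by blast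
qed

lemma R_bdy_rob_minimizer_le_nat_minimizer:
  assumes "0 \<le> \<epsilon>" and "\<theta>_n \<in> I" and "\<theta>_r \<in> I"
    and "\<forall>\<theta>\<in>I. R_nat mu_m mu_p K \<theta>_n \<le> R_nat mu_m mu_p K \<theta>"
    and "\<forall>\<theta>\<in>I. R_rob mu_m mu_p K \<epsilon> \<theta>_r \<le> R_rob mu_m mu_p K \<epsilon> \<theta>"
  shows "R_bdy mu_m mu_p K \<epsilon> \<theta>_r \<le> R_bdy mu_m mu_p K \<epsilon> \<theta>_n"
  using assms R_rob_eq[OF assms(1)] by force

end

theorem corollary6p3:
  fixes mu_m mu_p K \<epsilon> \<theta>_star \<theta>_f \<theta>_r :: real
  assumes "mu_m < mu_p"
    and "0 \<le> \<epsilon>" and "\<epsilon> \<le> (mu_p - mu_m) / 4"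
    and "1 < K"
    and "K \<le> exp ((mu_p - mu_m - 2 * \<epsilon>)\<^sup>2 / 2)"
    and "\<epsilon> > 0 \<longrightarrow> K \<le> phi_inv ((mu_p - mu_m) / \<epsilon> - 2)"
    and "\<theta>_star \<in> {mu_m..mu_p}"
    and "\<forall>\<theta>\<in>{mu_m..mu_p}. R_nat mu_m mu_p K \<theta>_star \<le> R_nat mu_m mu_p K \<theta>"
    and "\<theta>_f \<in> {mu_m..mu_p}"
    and "e_plus mu_p K \<theta>_f = e_minus mu_m \<theta>_f"
    and "\<theta>_r \<in> {mu_m..mu_p}"
    and "\<forall>\<theta>\<in>{mu_m..mu_p}. R_rob mu_m mu_p K \<epsilon> \<theta>_r \<le> R_rob mu_m mu_p K \<epsilon> \<theta>"
  shows "R_bdy mu_m mu_p K \<epsilon> \<theta>_f \<ge> R_bdy mu_m mu_p K \<epsilon> \<theta>_star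
       \<and> R_bdy mu_m mu_p K \<epsilon> \<theta>_star \<ge> R_bdy mu_m mu_p K \<epsilon> \<theta>_r"
proof -
  interpret gaussian_mixture mu_m mu_p K
    using assms(1,4) by unfold_locales
  have radius: "\<epsilon> * (K + 1)\<^sup>2 \<le> (mu_p - mu_m) * K"
  proof (cases "\<epsilon> = 0")
    case True
    then show ?thesis
      using assms(1) K_pos by simp
  next
    case False
    then show ?thesis
      using phi_inv_radius_bound[of \<epsilon> "mu_p - mu_m" K] assms(2,3,4,6) by simp
  qed
  have "\<theta>_f = theta_fair"
    using fair_threshold_unique assms(10) by blast
  then show ?thesis
    using R_bdy_nat_minimizer_le_theta_fair[OF assms(2) radius assms(7,8)]
      R_bdy_rob_minimizer_le_nat_minimizer[OF assms(2,7,11,8,12)] by simp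
qed

end
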